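(* Let $A$ be a real $n\times n$ matrix and let $J$ be an $n\times n$ Jordan form matrix similar to $A$. Fix a step size $h>0$, parameters $\psi=\psi(h)$, $\phi=\phi(h)$, an integer $s\ge 2$ and real constants $\alpha_2,\dots,\alpha_s$, $\theta_1,\dots,\theta_s$. For a matrix $M$ consider the following three difference schemes for $\mathbf{v}'=M\mathbf{v}$: (S1) $\dfrac{\mathbf{v}_{k+1}-\psi\mathbf{v}_k}{\phi}=M\mathbf{v}_k+\sum_{m=2}^{s}\alpha_m\phi^{m-1}M^m\mathbf{v}_k$; (S2) $\dfrac{\mathbf{v}_{k+1}-\psi\mathbf{v}_k}{\phi}=M\mathbf{v}_{k+1}+\sum_{m=2}^{s}\alpha_m\phi^{m-1}M^m\mathbf{v}_{k+1}$; (S3) $\dfrac{\mathbf{v}_{k+1}-\psi\mathbf{v}_k}{\phi}=M\big[\theta_1\mathbf{v}_k+(1-\theta_1)\mathbf{v}_{k+1}\big]+\sum_{m=2}^{s}\alpha_m\phi^{m-1}M^m\big[\theta_m\mathbf{v}_k+(1-\theta_m)\mathbf{v}_{k+1}\big]$. If one of these schemes, with $M=J$, is exact for the system $\mathbf{u}'=J\mathbf{u}$, then the same scheme with the same parameters and $M=A$ is exact for the system $\mathbf{x}'=A\mathbf{x}$.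
   Context: A one-step difference scheme with step size $h>0$ for an autonomous linear system $\mathbf{x}'=M\mathbf{x}$ generates, from an initial vector $\mathbf{x}_0$, a sequence $(\mathbf{x}_k)_{k\ge 0}$ (for implicit schemes it is assumed that $\mathbf{x}_{k+1}$ is uniquely determined by $\mathbf{x}_k$). The scheme is called exact if for every initial vector $\mathbf{x}_0$ the generated sequence satisfies $\mathbf{x}_k=\mathbf{x}(kh)$ for all $k\ge 0$, where $\mathbf{x}(t)$ is the solution of $\mathbf{x}'=M\mathbf{x}$ with $\mathbf{x}(0)=\mathbf{x}_0$. In the paper $\psi(h)=1+\mathcal{O}(h^2)$, $\phi(h)=h+\mathcal{O}(h^2)$. *)

theory Defs
  imports Complex_Main "Jordan_Normal_Form.Jordan_Normal_Form"
begin

datatype scheme = S1 | S2 | S3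

text \<open>One step of a scheme for v' = M v: the relation between v_k (= x) and v_(k+1) (= y),
  written componentwise.  psi, phi are the scalar parameters, s the order,
  al m = alpha_m (m = 2..s), th m = theta_m (m = 1..s).\<close>
definition scheme_step ::
  "scheme \<Rightarrow> nat \<Rightarrow> real \<Rightarrow> real \<Rightarrow> nat \<Rightarrow> (nat \<Rightarrow> real) \<Rightarrow> (nat \<Rightarrow> real) \<Rightarrow>
   'a::real_normed_field mat \<Rightarrow> 'a vec \<Rightarrow> 'a vec \<Rightarrow> bool" where
  "scheme_step S n psi phi s al th M x y \<longleftrightarrow>
     dim_vec y = n \<and>
     (\<forall>i<n. (y $ i - of_real psi * x $ i) / of_real phi =
        (case S of
          S1 \<Rightarrow> (M *\<^sub>v x) $ i +
                (\<Sum>m = 2..s. of_real (al m * phi ^ (m - 1)) * ((M ^\<^sub>m m) *\<^sub>v x) $ i)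
        | S2 \<Rightarrow> (M *\<^sub>v y) $ i +
                (\<Sum>m = 2..s. of_real (al m * phi ^ (m - 1)) * ((M ^\<^sub>m m) *\<^sub>v y) $ i)
        | S3 \<Rightarrow> (M *\<^sub>v (of_real (th 1) \<cdot>\<^sub>v x + of_real (1 - th 1) \<cdot>\<^sub>v y)) $ i +
                (\<Sum>m = 2..s. of_real (al m * phi ^ (m - 1)) *
                   ((M ^\<^sub>m m) *\<^sub>v (of_real (th m) \<cdot>\<^sub>v x + of_real (1 - th m) \<cdot>\<^sub>v y)) $ i)))"

definition ode_solution :: "nat \<Rightarrow> 'a::real_normed_field mat \<Rightarrow> 'a vec \<Rightarrow> (real \<Rightarrow> 'a vec) \<Rightarrow> bool" where
  "ode_solution n M x0 u \<longleftrightarrow> u 0 = x0 \<and>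
     (\<forall>t. dim_vec (u t) = n \<and>
        (\<forall>i<n. ((\<lambda>t. u t $ i) has_vector_derivative (M *\<^sub>v u t) $ i) (at t)))"

definition exact_scheme ::
  "scheme \<Rightarrow> nat \<Rightarrow> real \<Rightarrow> real \<Rightarrow> nat \<Rightarrow> (nat \<Rightarrow> real) \<Rightarrow> (nat \<Rightarrow> real) \<Rightarrow> real \<Rightarrow>
   'a::real_normed_field mat \<Rightarrow> bool" where
  "exact_scheme S n psi phi s al th h M \<longleftrightarrow>
     (\<forall>x. dim_vec x = n \<longrightarrow> (\<exists>!y. scheme_step S n psi phi s al th M x y)) \<and>
     (\<forall>v. dim_vec (v 0) = n \<and> (\<forall>k. scheme_step S n psi phi s al th M (v k) (v (Suc k))) \<longrightarrow>
        (\<forall>u. ode_solution n M (v 0) u \<longrightarrow> (\<forall>k. v k = u (real k * h))))"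

end

theory Submission
  imports Defs
begin

text \<open>The scheme equation is linear in the pair of consecutive iterates and involves only real
  coefficients and powers of the matrix. Hence its componentwise defect transforms covariantly
  under a similarity \<open>M \<mapsto> P M Q\<close> with \<open>Q = P\<inverse>\<close> (as \<open>(P M Q)\<^sup>m = P M\<^sup>m Q\<close>), and commutes with
  complexification and with taking real parts when the matrix is real. Exactness for \<open>J\<close> therefore
  passes to the complex matrix \<open>A = P J Q\<close>, and from there to the real matrix \<open>A\<close>: the real part of
  the unique complex step is a real step, and real steps and real solutions embed into complex
  ones.\<close>

definition scheme_point ::
  "scheme \<Rightarrow> (nat \<Rightarrow> real) \<Rightarrow> nat \<Rightarrow> 'a::real_normed_field vec \<Rightarrow> 'a vec \<Rightarrow> 'a vec" where
  "scheme_point S th m x y =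
     (case S of S1 \<Rightarrow> x | S2 \<Rightarrow> y | S3 \<Rightarrow> of_real (th m) \<cdot>\<^sub>v x + of_real (1 - th m) \<cdot>\<^sub>v y)"

definition scheme_rhs ::
  "nat \<Rightarrow> (nat \<Rightarrow> real) \<Rightarrow> real \<Rightarrow> 'a::real_normed_field mat \<Rightarrow> (nat \<Rightarrow> 'a vec) \<Rightarrow> nat \<Rightarrow> 'a" where
  "scheme_rhs s al phi M z i =
     (M *\<^sub>v z 1) $ i + (\<Sum>m = 2..s. of_real (al m * phi ^ (m - 1)) * (M ^\<^sub>m m *\<^sub>v z m) $ i)"

definition scheme_defect ::
  "scheme \<Rightarrow> nat \<Rightarrow> real \<Rightarrow> real \<Rightarrow> nat \<Rightarrow> (nat \<Rightarrow> real) \<Rightarrow> (nat \<Rightarrow> real) \<Rightarrow>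
   'a::real_normed_field mat \<Rightarrow> 'a vec \<Rightarrow> 'a vec \<Rightarrow> 'a vec" where
  "scheme_defect S n psi phi s al th M x y =
     vec n (\<lambda>i. (y $ i - of_real psi * x $ i) / of_real phi -
                scheme_rhs s al phi M (\<lambda>m. scheme_point S th m x y) i)"

lemma scheme_step_iff_defect:
  "scheme_step S n psi phi s al th M x y \<longleftrightarrow>
     dim_vec y = n \<and> scheme_defect S n psi phi s al th M x y = 0\<^sub>v n"
  unfolding scheme_step_def scheme_defect_def scheme_rhs_def scheme_point_def
  by (cases S) (auto simp: vec_eq_iff)

lemma scheme_step_carrier:
  "scheme_step S n psi phi s al th M x y \<Longrightarrow> y \<in> carrier_vec n"
  unfolding scheme_step_iff_defect carrier_vec_def by blast

lemma ode_solution_carrier: "ode_solution n M x0 u \<Longrightarrow> u t \<in> carrier_vec n"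
  unfolding ode_solution_def carrier_vec_def by blast

lemma scheme_point_carrier:
  "x \<in> carrier_vec n \<Longrightarrow> y \<in> carrier_vec n \<Longrightarrow> scheme_point S th m x y \<in> carrier_vec n"
  by (cases S) (auto simp: scheme_point_def)

lemma similar_mat_wit_mult_mat_vec:
  assumes wit: "similar_mat_wit A B P Q" and A: "A \<in> carrier_mat n n" and w: "w \<in> carrier_vec n"
  shows "A *\<^sub>v (P *\<^sub>v w) = P *\<^sub>v (B *\<^sub>v w)"
proof -
  note D = similar_mat_witD2[OF A wit]
  have "A *\<^sub>v (P *\<^sub>v w) = A * P *\<^sub>v w"
    by (rule assoc_mult_mat_vec[OF A D(6) w, symmetric])
  also have "A * P = P * B"
    using D by (simp add: assoc_mult_mat[of _ n n _ n _ n])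
  finally show ?thesis using D w by simp
qed

lemma similar_mat_wit_cancel_mult_mat_vec:
  assumes wit: "similar_mat_wit A B P Q" and A: "A \<in> carrier_mat n n" and w: "w \<in> carrier_vec n"
  shows "P *\<^sub>v (Q *\<^sub>v w) = w"
  using similar_mat_witD2[OF A wit] w by (simp flip: assoc_mult_mat_vec)

lemma mult_mat_vec_index_sum:
  assumes "P \<in> carrier_mat n k" and "w \<in> carrier_vec k" and "i < n"
  shows "(P *\<^sub>v w) $ i = (\<Sum>j<k. P $$ (i, j) * w $ j)"
  using assms by (simp add: scalar_prod_def atLeast0LessThan)

lemma scheme_point_mult_mat_vec:
  assumes "P \<in> carrier_mat n n" and "x \<in> carrier_vec n" and "y \<in> carrier_vec n"
  shows "scheme_point S th m (P *\<^sub>v x) (P *\<^sub>v y) = P *\<^sub>v scheme_point S th m x y"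
  using assms by (cases S) (simp_all add: scheme_point_def mult_add_distrib_mat_vec mult_mat_vec)

lemma scheme_rhs_similar:
  assumes wit: "similar_mat_wit A B P Q" and A: "A \<in> carrier_mat n n"
    and z: "\<And>m. z m \<in> carrier_vec n" and i: "i < n"
  shows "scheme_rhs s al phi A (\<lambda>m. P *\<^sub>v z m) i = (P *\<^sub>v vec n (scheme_rhs s al phi B z)) $ i"
proof -
  note D = similar_mat_witD2[OF A wit]
  define c where "c m = (of_real (al m * phi ^ (m - 1)) :: 'a)" for m
  have pow: "A ^\<^sub>m m *\<^sub>v (P *\<^sub>v z m) = P *\<^sub>v (B ^\<^sub>m m *\<^sub>v z m)" for m
    using similar_mat_wit_mult_mat_vec[OF similar_mat_wit_pow[OF wit] pow_carrier_mat[OF A] z] .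
  have comp: "(A ^\<^sub>m m *\<^sub>v (P *\<^sub>v z m)) $ i = (\<Sum>j<n. P $$ (i, j) * (B ^\<^sub>m m *\<^sub>v z m) $ j)" for m
    unfolding pow by (rule mult_mat_vec_index_sum[OF D(6) mult_mat_vec_carrier[OF pow_carrier_mat[OF D(5)] z] i])
  have comp1: "(A *\<^sub>v (P *\<^sub>v z 1)) $ i = (\<Sum>j<n. P $$ (i, j) * (B *\<^sub>v z 1) $ j)"
    unfolding similar_mat_wit_mult_mat_vec[OF wit A z]
    by (rule mult_mat_vec_index_sum[OF D(6) mult_mat_vec_carrier[OF D(5) z] i])
  have "scheme_rhs s al phi A (\<lambda>m. P *\<^sub>v z m) i =
      (\<Sum>j<n. P $$ (i, j) * (B *\<^sub>v z 1) $ j) +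
      (\<Sum>m = 2..s. \<Sum>j<n. P $$ (i, j) * (c m * (B ^\<^sub>m m *\<^sub>v z m) $ j))"
    unfolding scheme_rhs_def comp comp1 c_def by (simp add: sum_distrib_left mult.left_commute)
  also have "\<dots> = (\<Sum>j<n. P $$ (i, j) * scheme_rhs s al phi B z j)"
    by (simp add: sum.swap[of _ "{2..s}"] scheme_rhs_def c_def distrib_left sum.distrib sum_distrib_left)
  also have "\<dots> = (P *\<^sub>v vec n (scheme_rhs s al phi B z)) $ i"
    using D i by (simp add: scalar_prod_def atLeast0LessThan)
  finally show ?thesis .
qed

lemma scheme_defect_similar:
  assumes wit: "similar_mat_wit A B P Q" and A: "A \<in> carrier_mat n n"
    and x: "x \<in> carrier_vec n" and y: "y \<in> carrier_vec n"
  shows "scheme_defect S n psi phi s al th A (P *\<^sub>v x) (P *\<^sub>v y) =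
    P *\<^sub>v scheme_defect S n psi phi s al th B x y"
proof
  note D = similar_mat_witD2[OF A wit]
  let ?z = "\<lambda>m. scheme_point S th m x y"
  note z = scheme_point_carrier[OF x y]
  fix i assume "i < dim_vec (P *\<^sub>v scheme_defect S n psi phi s al th B x y)"
  then have i: "i < n" using D by simp
  have "((P *\<^sub>v y) $ i - of_real psi * (P *\<^sub>v x) $ i) / of_real phi =
      (\<Sum>j<n. P $$ (i, j) * ((y $ j - of_real psi * x $ j) / of_real phi))"
    unfolding mult_mat_vec_index_sum[OF D(6) x i] mult_mat_vec_index_sum[OF D(6) y i]
    by (simp add: sum_divide_distrib[symmetric] sum_distrib_left sum_subtractf[symmetric] algebra_simps)
  moreover have "scheme_rhs s al phi A (\<lambda>m. scheme_point S th m (P *\<^sub>v x) (P *\<^sub>v y)) i =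
      (\<Sum>j<n. P $$ (i, j) * scheme_rhs s al phi B ?z j)"
    unfolding scheme_point_mult_mat_vec[OF D(6) x y] scheme_rhs_similar[OF wit A z i]
    using D i by (simp add: scalar_prod_def atLeast0LessThan)
  ultimately show "scheme_defect S n psi phi s al th A (P *\<^sub>v x) (P *\<^sub>v y) $ i =
      (P *\<^sub>v scheme_defect S n psi phi s al th B x y) $ i"
    using D i by (simp add: scheme_defect_def scalar_prod_def atLeast0LessThan
        sum_subtractf right_diff_distrib)
qed (use similar_mat_witD2[OF A wit] in \<open>simp add: scheme_defect_def\<close>)

lemma scheme_step_similar_iff:
  assumes wit: "similar_mat_wit A B P Q" and A: "A \<in> carrier_mat n n"
    and x: "x \<in> carrier_vec n" and y: "y \<in> carrier_vec n"
  shows "scheme_step S n psi phi s al th A (P *\<^sub>v x) (P *\<^sub>v y) \<longleftrightarrow>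
    scheme_step S n psi phi s al th B x y"
proof -
  note D = similar_mat_witD2[OF A wit]
  let ?d = "scheme_defect S n psi phi s al th B x y"
  have d: "?d \<in> carrier_vec n" by (simp add: scheme_defect_def)
  have "?d = Q *\<^sub>v (P *\<^sub>v ?d)"
    using similar_mat_wit_cancel_mult_mat_vec[OF similar_mat_wit_sym[OF wit] D(5) d] by simp
  then have "P *\<^sub>v ?d = 0\<^sub>v n \<longleftrightarrow> ?d = 0\<^sub>v n"
    using D by auto
  then show ?thesis
    unfolding scheme_step_iff_defect scheme_defect_similar[OF wit A x y] using D y by simp
qed

lemma ode_solution_similar:
  assumes wit: "similar_mat_wit A B P Q" and A: "A \<in> carrier_mat n n"
    and sol: "ode_solution n B x0 u"
  shows "ode_solution n A (P *\<^sub>v x0) (\<lambda>t. P *\<^sub>v u t)"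
  unfolding ode_solution_def
proof (intro conjI allI impI)
  note D = similar_mat_witD2[OF A wit]
  note u = ode_solution_carrier[OF sol]
  from sol have der: "\<And>j. j < n \<Longrightarrow> ((\<lambda>t. u t $ j) has_vector_derivative (B *\<^sub>v u t) $ j) (at t)" for t
    unfolding ode_solution_def by blast
  show "P *\<^sub>v u 0 = P *\<^sub>v x0" using sol by (simp add: ode_solution_def)
  fix t
  show "dim_vec (P *\<^sub>v u t) = n" using D by simp
  fix i assume i: "i < n"
  have "((\<lambda>t. \<Sum>j<n. P $$ (i, j) * u t $ j) has_vector_derivative
      (\<Sum>j<n. P $$ (i, j) * (B *\<^sub>v u t) $ j)) (at t)"
    by (intro has_vector_derivative_sum has_vector_derivative_mult_right der) simp
  then show "((\<lambda>t. (P *\<^sub>v u t) $ i) has_vector_derivative (A *\<^sub>v (P *\<^sub>v u t)) $ i) (at t)"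
    unfolding similar_mat_wit_mult_mat_vec[OF wit A u] mult_mat_vec_index_sum[OF D(6) u i]
      mult_mat_vec_index_sum[OF D(6) mult_mat_vec_carrier[OF D(5) u] i] .
qed

lemma exact_scheme_similar:
  assumes wit: "similar_mat_wit A B P Q" and A: "A \<in> carrier_mat n n"
    and exact: "exact_scheme S n psi phi s al th h B"
  shows "exact_scheme S n psi phi s al th h A"
proof -
  note D = similar_mat_witD2[OF A wit]
  from exact have B_unique: "\<And>x. dim_vec x = n \<Longrightarrow> \<exists>!y. scheme_step S n psi phi s al th B x y"
    and B_grid: "\<And>w U k. dim_vec (w 0) = n \<Longrightarrow>
      (\<And>k. scheme_step S n psi phi s al th B (w k) (w (Suc k))) \<Longrightarrow>
      ode_solution n B (w 0) U \<Longrightarrow> w k = U (real k * h)"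
    unfolding exact_scheme_def by blast+
  have PQ: "P *\<^sub>v (Q *\<^sub>v w) = w" if "w \<in> carrier_vec n" for w
    using similar_mat_wit_cancel_mult_mat_vec[OF wit A that] .
  have step_iff: "scheme_step S n psi phi s al th A x y \<longleftrightarrow>
      scheme_step S n psi phi s al th B (Q *\<^sub>v x) (Q *\<^sub>v y)"
    if "x \<in> carrier_vec n" "y \<in> carrier_vec n" for x y
    using scheme_step_similar_iff[OF wit A mult_mat_vec_carrier[OF D(7) that(1)]
        mult_mat_vec_carrier[OF D(7) that(2)]]
    unfolding PQ[OF that(1)] PQ[OF that(2)] .
  show ?thesis
    unfolding exact_scheme_def
  proof (intro conjI allI impI)
    fix x :: "'a vec" assume "dim_vec x = n"
    then have x: "x \<in> carrier_vec n" by auto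
    have "dim_vec (Q *\<^sub>v x) = n" using D(7) by simp
    then obtain y' where y': "scheme_step S n psi phi s al th B (Q *\<^sub>v x) y'"
      and uniq: "\<And>z. scheme_step S n psi phi s al th B (Q *\<^sub>v x) z \<Longrightarrow> z = y'"
      using B_unique by blast
    show "\<exists>!y. scheme_step S n psi phi s al th A x y"
    proof
      have "Q *\<^sub>v (P *\<^sub>v y') = y'"
        using similar_mat_wit_cancel_mult_mat_vec[OF similar_mat_wit_sym[OF wit] D(5) scheme_step_carrier[OF y']] .
      then show "scheme_step S n psi phi s al th A x (P *\<^sub>v y')"
        using step_iff[OF x mult_mat_vec_carrier[OF D(6) scheme_step_carrier[OF y']]] y' by simp
    next
      fix y assume y: "scheme_step S n psi phi s al th A x y"
      have "Q *\<^sub>v y = y'"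
        using uniq y step_iff[OF x scheme_step_carrier[OF y]] by blast
      then show "y = P *\<^sub>v y'"
        using PQ[OF scheme_step_carrier[OF y]] by simp
    qed
  next
    fix v u and k :: nat
    assume "dim_vec (v 0) = n \<and> (\<forall>k. scheme_step S n psi phi s al th A (v k) (v (Suc k)))"
    then have v0: "v 0 \<in> carrier_vec n"
      and steps: "\<And>k. scheme_step S n psi phi s al th A (v k) (v (Suc k))"
      by auto
    have v: "v k \<in> carrier_vec n" for k
      using v0 scheme_step_carrier[OF steps] by (cases k) auto
    assume sol: "ode_solution n A (v 0) u"
    have B_steps: "scheme_step S n psi phi s al th B (Q *\<^sub>v v k) (Q *\<^sub>v v (Suc k))" for k
      using steps step_iff[OF v v] by simp
    have B_sol: "ode_solution n B (Q *\<^sub>v v 0) (\<lambda>t. Q *\<^sub>v u t)"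
      by (rule ode_solution_similar[OF similar_mat_wit_sym[OF wit] D(5) sol])
    have "Q *\<^sub>v v k = Q *\<^sub>v u (real k * h)"
      using B_grid[of "\<lambda>k. Q *\<^sub>v v k", OF _ B_steps B_sol] D(7) by simp
    then show "v k = u (real k * h)"
      using PQ[OF v] PQ[OF ode_solution_carrier[OF sol]] by metis
  qed
qed

lemma scheme_point_of_real:
  fixes x y :: "real vec"
  assumes "x \<in> carrier_vec n" and "y \<in> carrier_vec n"
  shows "scheme_point S th m (map_vec complex_of_real x) (map_vec complex_of_real y) =
    map_vec complex_of_real (scheme_point S th m x y)"
  using assms by (cases S) (auto simp: scheme_point_def)

lemma scheme_point_Re:
  fixes x :: "real vec" and y :: "complex vec"
  assumes "x \<in> carrier_vec n" and "y \<in> carrier_vec n"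
  shows "map_vec Re (scheme_point S th m (map_vec complex_of_real x) y) =
    scheme_point S th m x (map_vec Re y)"
  using assms by (cases S) (auto simp: scheme_point_def)

lemma Re_index_mult_mat_vec_of_real:
  fixes B :: "real mat" and w :: "complex vec"
  assumes "B \<in> carrier_mat nr nc" and "w \<in> carrier_vec nc" and "i < nr"
  shows "Re ((map_mat complex_of_real B *\<^sub>v w) $ i) = (B *\<^sub>v map_vec Re w) $ i"
  using assms by (simp add: scalar_prod_def Re_sum)

lemma index_mult_mat_vec_of_real:
  fixes B :: "real mat" and w :: "real vec"
  assumes "B \<in> carrier_mat nr nc" and "w \<in> carrier_vec nc" and "i < nr"
  shows "(map_mat complex_of_real B *\<^sub>v map_vec complex_of_real w) $ i =
    complex_of_real ((B *\<^sub>v w) $ i)"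
  using assms by (simp add: scalar_prod_def)

lemma scheme_rhs_of_real:
  fixes A :: "real mat" and z :: "nat \<Rightarrow> real vec"
  assumes A: "A \<in> carrier_mat n n" and z: "\<And>m. z m \<in> carrier_vec n" and i: "i < n"
  shows "scheme_rhs s al phi (map_mat complex_of_real A) (\<lambda>m. map_vec complex_of_real (z m)) i =
    complex_of_real (scheme_rhs s al phi A z i)"
proof -
  have "(map_mat complex_of_real A ^\<^sub>m m *\<^sub>v map_vec complex_of_real (z m)) $ i =
      complex_of_real ((A ^\<^sub>m m *\<^sub>v z m) $ i)" for m
    unfolding of_real_hom.mat_hom_pow[OF A, symmetric]
    by (rule index_mult_mat_vec_of_real[OF pow_carrier_mat[OF A] z i])
  then show ?thesis
    by (simp add: scheme_rhs_def index_mult_mat_vec_of_real[OF A z i])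
qed

lemma scheme_rhs_Re:
  fixes A :: "real mat" and z :: "nat \<Rightarrow> complex vec"
  assumes A: "A \<in> carrier_mat n n" and z: "\<And>m. z m \<in> carrier_vec n" and i: "i < n"
  shows "Re (scheme_rhs s al phi (map_mat complex_of_real A) z i) =
    scheme_rhs s al phi A (\<lambda>m. map_vec Re (z m)) i"
proof -
  have "Re ((map_mat complex_of_real A ^\<^sub>m m *\<^sub>v z m) $ i) = (A ^\<^sub>m m *\<^sub>v map_vec Re (z m)) $ i" for m
    unfolding of_real_hom.mat_hom_pow[OF A, symmetric]
    by (rule Re_index_mult_mat_vec_of_real[OF pow_carrier_mat[OF A] z i])
  then show ?thesis
    by (simp add: scheme_rhs_def Re_sum Re_index_mult_mat_vec_of_real[OF A z i])
qed

lemma scheme_defect_of_real: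
  fixes A :: "real mat" and x y :: "real vec"
  assumes A: "A \<in> carrier_mat n n" and x: "x \<in> carrier_vec n" and y: "y \<in> carrier_vec n"
  shows "scheme_defect S n psi phi s al th (map_mat complex_of_real A)
      (map_vec complex_of_real x) (map_vec complex_of_real y) =
    map_vec complex_of_real (scheme_defect S n psi phi s al th A x y)"
  using x y
  by (auto simp: scheme_defect_def scheme_point_of_real[OF x y]
      scheme_rhs_of_real[OF A scheme_point_carrier[OF x y]])

lemma scheme_defect_Re:
  fixes A :: "real mat" and x :: "real vec" and y :: "complex vec"
  assumes A: "A \<in> carrier_mat n n" and x: "x \<in> carrier_vec n" and y: "y \<in> carrier_vec n"
  shows "map_vec Re (scheme_defect S n psi phi s al th (map_mat complex_of_real A)
      (map_vec complex_of_real x) y) =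
    scheme_defect S n psi phi s al th A x (map_vec Re y)"
proof -
  have "map_vec complex_of_real x \<in> carrier_vec n" using x by simp
  note z = scheme_point_carrier[OF this y]
  show ?thesis
    using x y by (auto simp: scheme_defect_def scheme_point_Re[OF x y] scheme_rhs_Re[OF A z]
        Re_divide_of_real)
qed

lemma scheme_step_of_real_iff:
  fixes A :: "real mat" and x y :: "real vec"
  assumes A: "A \<in> carrier_mat n n" and x: "x \<in> carrier_vec n"
  shows "scheme_step S n psi phi s al th (map_mat complex_of_real A)
      (map_vec complex_of_real x) (map_vec complex_of_real y) \<longleftrightarrow>
    scheme_step S n psi phi s al th A x y"
proof (cases "y \<in> carrier_vec n")
  case True
  then show ?thesis
    unfolding scheme_step_iff_defect scheme_defect_of_real[OF A x True] of_real_hom.vec_hom_zero_iff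
    by (simp add: carrier_vecD)
next
  case False
  then show ?thesis
    unfolding scheme_step_iff_defect carrier_vec_def by simp
qed

lemma scheme_step_Re:
  fixes A :: "real mat" and x :: "real vec" and y :: "complex vec"
  assumes A: "A \<in> carrier_mat n n" and x: "x \<in> carrier_vec n"
    and step: "scheme_step S n psi phi s al th (map_mat complex_of_real A) (map_vec complex_of_real x) y"
  shows "scheme_step S n psi phi s al th A x (map_vec Re y)"
proof -
  note y = scheme_step_carrier[OF step]
  have "scheme_defect S n psi phi s al th A x (map_vec Re y) =
      map_vec Re (scheme_defect S n psi phi s al th (map_mat complex_of_real A)
        (map_vec complex_of_real x) y)"
    by (rule scheme_defect_Re[OF A x y, symmetric])
  also have "\<dots> = 0\<^sub>v n"
    using step unfolding scheme_step_iff_defect by auto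
  finally show ?thesis
    using y unfolding scheme_step_iff_defect carrier_vec_def by simp
qed

lemma ode_solution_of_real:
  fixes A :: "real mat"
  assumes A: "A \<in> carrier_mat n n" and sol: "ode_solution n A x0 u"
  shows "ode_solution n (map_mat complex_of_real A) (map_vec complex_of_real x0)
    (\<lambda>t. map_vec complex_of_real (u t))"
  unfolding ode_solution_def
proof (intro conjI allI impI)
  note u = ode_solution_carrier[OF sol]
  from sol have der: "\<And>i. i < n \<Longrightarrow> ((\<lambda>t. u t $ i) has_vector_derivative (A *\<^sub>v u t) $ i) (at t)" for t
    unfolding ode_solution_def by blast
  show "map_vec complex_of_real (u 0) = map_vec complex_of_real x0"
    using sol unfolding ode_solution_def by blast
  fix t
  show "dim_vec (map_vec complex_of_real (u t)) = n" using u by simp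
  fix i assume i: "i < n"
  have f: "(\<lambda>t. map_vec complex_of_real (u t) $ i) = (\<lambda>t. complex_of_real (u t $ i))"
    using carrier_vecD[OF u] i by simp
  have "((\<lambda>t. u t $ i) has_real_derivative (A *\<^sub>v u t) $ i) (at t)"
    using der[OF i] by (simp add: has_real_derivative_iff_has_vector_derivative)
  then show "((\<lambda>t. map_vec complex_of_real (u t) $ i) has_vector_derivative
      (map_mat complex_of_real A *\<^sub>v map_vec complex_of_real (u t)) $ i) (at t)"
    unfolding f index_mult_mat_vec_of_real[OF A u i] by (rule has_vector_derivative_of_real)
qed

lemma exact_scheme_of_real:
  fixes A :: "real mat"
  assumes A: "A \<in> carrier_mat n n"
    and exact: "exact_scheme S n psi phi s al th h (map_mat complex_of_real A)"
  shows "exact_scheme S n psi phi s al th h A"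
proof -
  let ?A = "map_mat complex_of_real A" and ?c = "map_vec complex_of_real"
  from exact have C_unique: "\<And>x. dim_vec x = n \<Longrightarrow> \<exists>!y. scheme_step S n psi phi s al th ?A x y"
    and C_grid: "\<And>w U k. dim_vec (w 0) = n \<Longrightarrow>
      (\<And>k. scheme_step S n psi phi s al th ?A (w k) (w (Suc k))) \<Longrightarrow>
      ode_solution n ?A (w 0) U \<Longrightarrow> w k = U (real k * h)"
    unfolding exact_scheme_def by blast+
  show ?thesis
    unfolding exact_scheme_def
  proof (intro conjI allI impI)
    fix x :: "real vec" assume "dim_vec x = n"
    then have x: "x \<in> carrier_vec n" by auto
    then obtain y' where y': "scheme_step S n psi phi s al th ?A (?c x) y'"
      and uniq: "\<And>z. scheme_step S n psi phi s al th ?A (?c x) z \<Longrightarrow> z = y'"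
      using C_unique[of "?c x"] by auto
    show "\<exists>!y. scheme_step S n psi phi s al th A x y"
    proof (rule ex_ex1I)
      show "\<exists>y. scheme_step S n psi phi s al th A x y"
        using scheme_step_Re[OF A x y'] ..
    next
      fix y z assume "scheme_step S n psi phi s al th A x y" "scheme_step S n psi phi s al th A x z"
      then have "?c y = ?c z"
        using uniq scheme_step_of_real_iff[OF A x] by metis
      then show "y = z" by (rule of_real_hom.vec_hom_inj)
    qed
  next
    fix v u and k :: nat
    assume "dim_vec (v 0) = n \<and> (\<forall>k. scheme_step S n psi phi s al th A (v k) (v (Suc k)))"
    then have v0: "v 0 \<in> carrier_vec n"
      and steps: "\<And>k. scheme_step S n psi phi s al th A (v k) (v (Suc k))"
      by auto
    have v: "v k \<in> carrier_vec n" for k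
      using v0 scheme_step_carrier[OF steps] by (cases k) auto
    assume sol: "ode_solution n A (v 0) u"
    have "?c (v k) = ?c (u (real k * h))"
    proof (rule C_grid[of "\<lambda>k. ?c (v k)"])
      show "dim_vec (?c (v 0)) = n" using v0 by simp
      show "scheme_step S n psi phi s al th ?A (?c (v k)) (?c (v (Suc k)))" for k
        using steps scheme_step_of_real_iff[OF A v] by blast
      show "ode_solution n ?A (?c (v 0)) (\<lambda>t. ?c (u t))"
        by (rule ode_solution_of_real[OF A sol])
    qed
    then show "v k = u (real k * h)" by (rule of_real_hom.vec_hom_inj)
  qed
qed

theorem theorem3:
  fixes A :: "real mat" and J :: "complex mat" and n_as :: "(nat \<times> complex) list"
    and h psi phi :: real and s n :: nat and al th :: "nat \<Rightarrow> real" and S :: scheme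
  assumes "A \<in> carrier_mat n n"
    and "jordan_nf (map_mat complex_of_real A) n_as"
    and "J = jordan_matrix n_as"
    and "h > 0"
    and "s \<ge> 2"
    and "exact_scheme S n psi phi s al th h J"
  shows "exact_scheme S n psi phi s al th h A"
proof -
  from assms(2,3) obtain P Q where wit: "similar_mat_wit (map_mat complex_of_real A) J P Q"
    unfolding jordan_nf_def similar_mat_def by auto
  have "exact_scheme S n psi phi s al th h (map_mat complex_of_real A)"
    using exact_scheme_similar[OF wit _ assms(6)] assms(1) by simp
  then show ?thesis
    by (rule exact_scheme_of_real[OF assms(1)])
qed

end
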